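(* Assume ${\bf v}$ has the RCI property and is completely irrational. Then $$\Xi_{\bf v}=\bigcup_{J\subset\{1,\dots,d\}}\big\{\mathcal{L}^J_{{\bf v},x}: x\in\mathtt X^J_{\bf v}\big\}\;\cup\;\bigcup_{i=1}^d\Xi_{{\bf v}\setminus i},$$ and consequently $$\Xi_{\bf v}=\bigcup_{\emptyset\neq I\subset\{1,\dots,d\}}\ \bigcup_{J\subset I}\big\{\mathcal{L}^J_{{\bf v}_I,x}: x\in\mathtt X^J_{{\bf v}_I}\big\}\;\cup\;\{\mathbb{Z}^D\}.$$
   Context: Let $D\ge d\ge1$ be integers and ${\bf v}=\{v_1,\dots,v_d\}$ a set of linearly independent unit vectors in $\mathbb{R}^D$. For $I\subset\{1,\dots,d\}$ write ${\bf v}_I=\{v_i\}_{i\in I}$, ${\bf v}\setminus i:={\bf v}_{\{1,\dots,d\}\setminus\{i\}}$, $\mathcal{L}_{{\bf v}_I}:=\{n\in\mathbb{Z}^D: v_i\cdot n\ge0\ \forall i\in I\}$ (so $\mathcal{L}_{{\bf v}_\emptyset}=\mathbb{Z}^D$, $\mathcal{L}_{\bf v}:=\mathcal{L}_{{\bf v}_{\{1,\dots,d\}}}$), $A_{{\bf v}_I}z=(v_i\cdot z)_{i\in I}$, and $\mathcal{X}_{{\bf v}_I}:=\overline{A_{{\bf v}_I}(\mathcal{L}_{{\bf v}_I})}\subset[0,\infty)^I$. Subsets of $\mathbb{Z}^D$ carry the Fell topology (= product topology on $\{0,1\}^{\mathbb{Z}^D}$). $\Xi_{{\bf v}_I}:=\overline{\{\mathcal{L}_{{\bf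 v}_I}-n: n\in\mathcal{L}_{{\bf v}_I}\}}$, $\Xi_\emptyset=\{\mathbb{Z}^D\}$, $\Xi_{\bf v}:=\Xi_{{\bf v}_{\{1,\dots,d\}}}$. For nonempty $I$, ${\bf v}_I$ is rational (R) if $A_{{\bf v}_I}(\mathcal{L}_{{\bf v}_I})$ is a closed, discrete, finitely generated subsemigroup of $[0,\infty)^I$, and completely irrational (CI) if $\mathcal{X}_{{\bf v}_I}=[0,\infty)^I$; ${\bf v}$ has the RCI property if every ${\bf v}_I$ with $\emptyset\neq I\subsetneq\{1,\dots,d\}$ is R or CI. For $J\subset I$, $x\in\mathbb{R}^I$: $\mathcal{L}^J_{{\bf v}_I,x}:=\{n\in\mathbb{Z}^D: v_k\cdot n+x_k>0\ (k\in J),\ v_k\cdot n+x_k\ge0\ (k\in I\setminus J)\}$; $\mathtt X^\emptyset_{{\bf v}_I}:=\mathcal{X}_{{\bf v}_I}$ and for $J\ne\emptyset$, $\mathtt X^J_{{\bf v}_I}:=\{x\in\mathcal{X}_{{\bf v}_I}:\forall k\in J\ \exists n\in\mathbb{Z}^D,\ x_k=v_k\cdot n\neq0\}$; $\mathtt X^J_{\bf v}$ is the case $I=\{1,\dots,d\}$. *)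

theory Defs
  imports "HOL-Analysis.Analysis"
begin

text \<open>The ambient dimension D is the cardinality of a finite index type 'n;
  lattice points n \<in> \<int>^D are elements of int^'n, embedded into real^'n by lat.
  The family v = {v_1,...,v_d} is a function v :: nat \<Rightarrow> real^'n, used on {1..d}.
  A point of \<real>^I (I \<subseteq> {1..d}) is a function nat \<Rightarrow> real vanishing outside I;
  \<real>^I carries the topology induced from the product topology of nat \<Rightarrow> real,
  which on functions vanishing outside the finite set I is the Euclidean topology.\<close>

definition lat :: "int^'n \<Rightarrow> real^'n" where
  "lat z = (\<chi> i. of_int (z $ i))"

definition Lcone :: "(nat \<Rightarrow> real^'n) \<Rightarrow> nat set \<Rightarrow> (int^'n) set" where
  "Lcone v I = {z. \<forall>i\<in>I. v i \<bullet> lat z \<ge> 0}"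

definition Amap :: "(nat \<Rightarrow> real^'n) \<Rightarrow> nat set \<Rightarrow> real^'n \<Rightarrow> (nat \<Rightarrow> real)" where
  "Amap v I y = (\<lambda>k. if k \<in> I then v k \<bullet> y else 0)"

definition Xset :: "(nat \<Rightarrow> real^'n) \<Rightarrow> nat set \<Rightarrow> (nat \<Rightarrow> real) set" where
  "Xset v I = closure ((\<lambda>z. Amap v I (lat z)) ` Lcone v I)"

text \<open>The Fell topology on subsets of \<int>^D, i.e. the product topology on {0,1}^(\<int>^D),
  sets being identified with their characteristic functions.\<close>
definition fell_topology :: "((int^'n) \<Rightarrow> bool) topology" where
  "fell_topology = product_topology (\<lambda>_. discrete_topology (UNIV :: bool set)) UNIV"

definition fell_closure :: "(int^'n) set set \<Rightarrow> (int^'n) set set" where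
  "fell_closure S = {A. (\<lambda>z. z \<in> A) \<in> fell_topology closure_of ((\<lambda>B z. z \<in> B) ` S)}"

definition Xi :: "(nat \<Rightarrow> real^'n) \<Rightarrow> nat set \<Rightarrow> (int^'n) set set" where
  "Xi v I = fell_closure {(\<lambda>m. m - z) ` Lcone v I | z. z \<in> Lcone v I}"

definition discrete_set :: "(nat \<Rightarrow> real) set \<Rightarrow> bool" where
  "discrete_set S \<longleftrightarrow> (\<forall>x\<in>S. \<exists>U. open U \<and> U \<inter> S = {x})"

definition fin_gen_subsemigroup :: "nat set \<Rightarrow> (nat \<Rightarrow> real) set \<Rightarrow> bool" where
  "fin_gen_subsemigroup I S \<longleftrightarrow>
     S \<subseteq> {x. (\<forall>k\<in>I. x k \<ge> 0) \<and> (\<forall>k. k \<notin> I \<longrightarrow> x k = 0)} \<and>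
     (\<forall>x\<in>S. \<forall>y\<in>S. (\<lambda>k. x k + y k) \<in> S) \<and>
     (\<exists>G. finite G \<and> G \<subseteq> S \<and> S = {(\<lambda>k. \<Sum>g\<in>G. real (c g) * g k) | c. True})"

definition rational :: "(nat \<Rightarrow> real^'n) \<Rightarrow> nat set \<Rightarrow> bool" where
  "rational v I \<longleftrightarrow>
     (let S = (\<lambda>z. Amap v I (lat z)) ` Lcone v I in
        closed S \<and> discrete_set S \<and> fin_gen_subsemigroup I S)"

definition completely_irrational :: "(nat \<Rightarrow> real^'n) \<Rightarrow> nat set \<Rightarrow> bool" where
  "completely_irrational v I \<longleftrightarrow>
     Xset v I = {x. (\<forall>k\<in>I. x k \<ge> 0) \<and> (\<forall>k. k \<notin> I \<longrightarrow> x k = 0)}"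

definition RCI :: "(nat \<Rightarrow> real^'n) \<Rightarrow> nat \<Rightarrow> bool" where
  "RCI v d \<longleftrightarrow> (\<forall>I. I \<noteq> {} \<and> I \<subset> {1..d} \<longrightarrow> rational v I \<or> completely_irrational v I)"

definition LJ :: "(nat \<Rightarrow> real^'n) \<Rightarrow> nat set \<Rightarrow> nat set \<Rightarrow> (nat \<Rightarrow> real) \<Rightarrow> (int^'n) set" where
  "LJ v I J x = {z. (\<forall>k\<in>J. v k \<bullet> lat z + x k > 0) \<and> (\<forall>k\<in>I - J. v k \<bullet> lat z + x k \<ge> 0)}"

definition XJ :: "(nat \<Rightarrow> real^'n) \<Rightarrow> nat set \<Rightarrow> nat set \<Rightarrow> (nat \<Rightarrow> real) set" where
  "XJ v I J = {x \<in> Xset v I. \<forall>k\<in>J. \<exists>z. x k = v k \<bullet> lat z \<and> x k \<noteq> 0}"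

end

theory Submission
  imports Defs
begin

text \<open>A set A lies in Xi_v iff on every finite window of \<int>^D it agrees with a translate
  L_v - n, n \<in> L_v; so A is the limit of translates along a sequence n_j. If some coordinate
  v_i \<bullet> n_j is unbounded, the constraint v_i \<ge> 0 eventually becomes void on every window and
  A \<in> Xi_{v - v_i}. Otherwise a subsequence of A_v n_j converges to some x \<in> X_v, each
  coordinate from a fixed side, and A = L^J_{v,x}, where J collects the coordinates approached
  from below at a value x_k \<in> v_k \<bullet> \<int>^D (at any other value the strict and the weak
  inequality cut out the same lattice points).
  Conversely, complete irrationality yields n \<in> L_v with A_v n within any margin of any point
  of [0,\<infinity>)^d, on any prescribed side of it: approaching x from below on J and from above
  elsewhere realises L^J_{v,x}, and sending one coordinate to infinity realises every element
  of Xi_{v - v_i}. Complete irrationality passes to subfamilies, so the second formula follows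
  from the first by induction on the index set.\<close>

lemma tendsto_fun_iff:
  fixes f :: "'x \<Rightarrow> 'a \<Rightarrow> 'b::topological_space"
  shows "(f \<longlongrightarrow> g) F \<longleftrightarrow> (\<forall>k. ((\<lambda>j. f j k) \<longlongrightarrow> g k) F)"
  using limitin_componentwise[of "\<lambda>_. euclidean" UNIV f g F]
  by (simp add: euclidean_product_topology)

lemma finite_nonzero_abs_lower_bound:
  fixes T :: "real set"
  assumes "finite T"
  obtains \<delta> where "\<delta> > 0" "\<And>t. t \<in> T \<Longrightarrow> t \<noteq> 0 \<Longrightarrow> \<delta> \<le> \<bar>t\<bar>"
proof
  let ?S = "insert 1 (abs ` (T - {0}))"
  show "Min ?S > 0" using assms by simp
  show "Min ?S \<le> \<bar>t\<bar>" if "t \<in> T" "t \<noteq> 0" for t using assms that by simp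
qed

lemma not_bdd_above_exceeds:
  fixes f :: "nat \<Rightarrow> 'a::linorder"
  assumes "\<not> bdd_above (range f)"
  obtains j where "j \<ge> N" "f j > M"
proof (rule ccontr)
  assume "\<not> thesis"
  have "f j \<le> max M (Max (f ` {..<N}))" for j
  proof (cases "j < N")
    case True
    then show ?thesis by (simp add: le_max_iff_disj)
  next
    case False
    then have "f j \<le> M" using that \<open>\<not> thesis\<close> by (meson not_le not_less)
    then show ?thesis by (simp add: le_max_iff_disj)
  qed
  then show False using assms by (auto simp: bdd_above_def)
qed

lemma bounded_range_nonneg_bdd_above:
  fixes f :: "nat \<Rightarrow> real"
  assumes "\<And>j. 0 \<le> f j" "bdd_above (range f)"
  shows "bounded (range f)"
proof -
  obtain B where "\<And>j. f j \<le> B"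
    using assms(2) by (auto simp: bdd_above_def)
  then have "range f \<subseteq> {0..B}"
    using assms(1) by auto
  then show ?thesis
    using bounded_closed_interval bounded_subset by blast
qed

lemma finite_range_constant_subseq:
  assumes "finite (range g)"
  shows "\<exists>r::nat \<Rightarrow> nat. strict_mono r \<and> (\<forall>j. g (r j) = g (r 0))"
proof -
  obtain j0 where "infinite {j. g j = g j0}"
    using pigeonhole_infinite[OF infinite_UNIV_nat assms] by auto
  then obtain r :: "nat \<Rightarrow> nat" where "strict_mono r" "\<And>j. g (r j) = g j0"
    using infinite_enumerate by blast
  then show ?thesis by auto
qed

lemma finite_bounded_seqs_convergent_subseq:
  fixes f :: "nat \<Rightarrow> 'k \<Rightarrow> real"
  assumes "finite K" "\<And>k. k \<in> K \<Longrightarrow> bounded (range (\<lambda>j. f j k))"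
  shows "\<exists>r x. strict_mono r \<and> (\<forall>k\<in>K. (\<lambda>j. f (r j) k) \<longlonglongrightarrow> x k)"
  using assms
proof (induction K rule: finite_induct)
  case empty
  show ?case using strict_mono_id by auto
next
  case (insert k K)
  then obtain r x where r: "strict_mono r" and lim: "\<forall>k\<in>K. (\<lambda>j. f (r j) k) \<longlonglongrightarrow> x k"
    by auto
  have "bounded (range (\<lambda>j. f (r j) k))"
    using insert.prems[of k] by (rule bounded_subset) auto
  then obtain r1 l where r1: "strict_mono r1" and "((\<lambda>j. f (r j) k) \<circ> r1) \<longlonglongrightarrow> l"
    using bounded_imp_convergent_subsequence by blast
  moreover have "((\<lambda>j. f (r j) k') \<circ> r1) \<longlonglongrightarrow> x k'" if "k' \<in> K" for k'
    using LIMSEQ_subseq_LIMSEQ lim r1 that by blast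
  ultimately have "\<forall>k'\<in>insert k K. (\<lambda>j. f ((r \<circ> r1) j) k') \<longlonglongrightarrow> (x(k := l)) k'"
    by (auto simp: o_def)
  moreover have "strict_mono (r \<circ> r1)" using r r1 by (rule strict_mono_o)
  ultimately show ?case by blast
qed

lemma finite_bounded_seqs_one_sided_subseq:
  fixes f :: "nat \<Rightarrow> 'k \<Rightarrow> real"
  assumes "finite K" "\<And>k. k \<in> K \<Longrightarrow> bounded (range (\<lambda>j. f j k))"
  shows "\<exists>q x P. strict_mono q \<and> (\<forall>k\<in>K. (\<lambda>j. f (q j) k) \<longlonglongrightarrow> x k) \<and>
           (\<forall>j. \<forall>k\<in>K. f (q j) k < x k \<longleftrightarrow> k \<in> P)"
proof -
  obtain r x where "strict_mono r" and lim: "\<forall>k\<in>K. (\<lambda>j. f (r j) k) \<longlonglongrightarrow> x k"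
    using finite_bounded_seqs_convergent_subseq[of K f] assms by blast
  define below where "below j = {k \<in> K. f (r j) k < x k}" for j
  have "range below \<subseteq> Pow K"
    by (auto simp: below_def)
  then have "finite (range below)"
    by (rule finite_subset) (simp add: \<open>finite K\<close>)
  from finite_range_constant_subseq[OF this]
  obtain s :: "nat \<Rightarrow> nat" where s: "strict_mono s" "\<forall>j. below (s j) = below (s 0)"
    by blast
  have "strict_mono (r \<circ> s)"
    using \<open>strict_mono r\<close> s(1) by (rule strict_mono_o)
  moreover have "\<forall>k\<in>K. (\<lambda>j. f ((r \<circ> s) j) k) \<longlonglongrightarrow> x k"
  proof
    fix k assume "k \<in> K"
    then show "(\<lambda>j. f ((r \<circ> s) j) k) \<longlonglongrightarrow> x k"
      using LIMSEQ_subseq_LIMSEQ[OF lim[rule_format] s(1)] by (simp add: o_def)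
  qed
  moreover have "\<forall>j. \<forall>k\<in>K. f ((r \<circ> s) j) k < x k \<longleftrightarrow> k \<in> below (s 0)"
    using s(2) by (auto simp: below_def)
  ultimately show ?thesis by blast
qed

lemma UN_nonempty_subsets_unfold:
  fixes F :: "'a set \<Rightarrow> 'b set" and X :: "'a set \<Rightarrow> 'b set"
  assumes "I \<noteq> {}" and X: "\<And>i. i \<in> I \<Longrightarrow> X (I - {i}) = (\<Union>I'\<in>Pow (I - {i}) - {{}}. F I') \<union> {U}"
  shows "F I \<union> (\<Union>i\<in>I. X (I - {i})) = (\<Union>I'\<in>Pow I - {{}}. F I') \<union> {U}"
proof (intro equalityI subsetI)
  fix A assume "A \<in> F I \<union> (\<Union>i\<in>I. X (I - {i}))"
  then show "A \<in> (\<Union>I'\<in>Pow I - {{}}. F I') \<union> {U}"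
  proof
    assume "A \<in> F I"
    then show ?thesis using \<open>I \<noteq> {}\<close> by blast
  next
    assume "A \<in> (\<Union>i\<in>I. X (I - {i}))"
    then obtain i where "i \<in> I" "A \<in> X (I - {i})" by blast
    then show ?thesis using X[of i] by auto
  qed
next
  fix A assume A: "A \<in> (\<Union>I'\<in>Pow I - {{}}. F I') \<union> {U}"
  show "A \<in> F I \<union> (\<Union>i\<in>I. X (I - {i}))"
  proof (cases "A = U")
    case True
    obtain i where "i \<in> I" using \<open>I \<noteq> {}\<close> by blast
    then show ?thesis using X[of i] True by blast
  next
    case False
    then obtain I' where "I' \<subseteq> I" "I' \<noteq> {}" "A \<in> F I'" using A by blast
    show ?thesis
    proof (cases "I' = I")
      case True
      then show ?thesis using \<open>A \<in> F I'\<close> by blast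
    next
      case False
      then obtain i where "i \<in> I" "i \<notin> I'" using \<open>I' \<subseteq> I\<close> by blast
      then have "A \<in> X (I - {i})" using X[of i] \<open>I' \<subseteq> I\<close> \<open>I' \<noteq> {}\<close> \<open>A \<in> F I'\<close> by blast
      then show ?thesis using \<open>i \<in> I\<close> by blast
    qed
  qed
qed

lemma nonneg_add_perturbed_iff:
  fixes s a x :: real
  assumes "s + x \<noteq> 0 \<Longrightarrow> \<bar>a - x\<bar> < \<bar>s + x\<bar>" and "s + x = 0 \<Longrightarrow> (b \<longleftrightarrow> a < x)"
  shows "0 \<le> s + a \<longleftrightarrow> (if b then 0 < s + x else 0 \<le> s + x)"
  using assms by (cases "s + x = 0") (auto simp: abs_if split: if_splits)

lemma lat_add: "lat (a + b) = lat a + lat b"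
  by (simp add: lat_def vec_eq_iff)

lemma lat_uminus: "lat (- a) = - lat a"
  by (simp add: lat_def vec_eq_iff)

lemma mem_Lcone_remove_iff:
  "i \<in> I \<Longrightarrow> z \<in> Lcone v I \<longleftrightarrow> z \<in> Lcone v (I - {i}) \<and> 0 \<le> v i \<bullet> lat z"
  by (auto simp: Lcone_def)

lemma LJ_empty_zero: "LJ v I {} (\<lambda>_. 0) = Lcone v I"
  by (simp add: LJ_def Lcone_def)

lemma add_mem_Lcone_iff_mem_LJ:
  assumes "J \<subseteq> I"
    and close: "\<And>k. k \<in> I \<Longrightarrow> v k \<bullet> lat m + x k \<noteq> 0 \<Longrightarrow>
                  \<bar>v k \<bullet> lat z - x k\<bar> < \<bar>v k \<bullet> lat m + x k\<bar>"
    and boundary: "\<And>k. k \<in> I \<Longrightarrow> v k \<bullet> lat m + x k = 0 \<Longrightarrow> (k \<in> J \<longleftrightarrow> v k \<bullet> lat z < x k)"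
  shows "m + z \<in> Lcone v I \<longleftrightarrow> m \<in> LJ v I J x"
proof -
  have "0 \<le> v k \<bullet> lat (m + z) \<longleftrightarrow>
          (if k \<in> J then 0 < v k \<bullet> lat m + x k else 0 \<le> v k \<bullet> lat m + x k)" if "k \<in> I" for k
    using nonneg_add_perturbed_iff[OF close boundary] that by (simp add: lat_add inner_add_right)
  then show ?thesis using assms(1) by (auto simp: Lcone_def LJ_def)
qed

definition nonneg_orthant :: "nat set \<Rightarrow> (nat \<Rightarrow> real) set" where
  "nonneg_orthant I = {x. (\<forall>k\<in>I. x k \<ge> 0) \<and> (\<forall>k. k \<notin> I \<longrightarrow> x k = 0)}"

lemma completely_irrational_iff: "completely_irrational v I \<longleftrightarrow> Xset v I = nonneg_orthant I"
  by (simp add: completely_irrational_def nonneg_orthant_def)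

lemma closed_nonneg_orthant: "closed (nonneg_orthant I)"
proof -
  have "nonneg_orthant I = (\<Inter>k\<in>I. {x. 0 \<le> x k}) \<inter> (\<Inter>k\<in>-I. {x. x k = 0})"
    by (auto simp: nonneg_orthant_def)
  moreover have "closed {x :: nat \<Rightarrow> real. 0 \<le> x k}" "closed {x :: nat \<Rightarrow> real. x k = 0}" for k
    by (auto intro: closed_Collect_le closed_Collect_eq continuous_on_product_coordinates)
  ultimately show ?thesis by (simp add: closed_Int closed_INT)
qed

lemma Xset_subset_nonneg_orthant: "Xset v I \<subseteq> nonneg_orthant I"
  unfolding Xset_def
  by (rule closure_minimal[OF _ closed_nonneg_orthant])
     (auto simp: nonneg_orthant_def Amap_def Lcone_def)

lemma Xset_approx:
  assumes "y \<in> Xset v I" "finite I" "\<epsilon> > 0"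
  obtains z where "z \<in> Lcone v I" "\<And>k. k \<in> I \<Longrightarrow> \<bar>v k \<bullet> lat z - y k\<bar> < \<epsilon>"
proof -
  obtain s where s: "\<And>j. s j \<in> (\<lambda>z. Amap v I (lat z)) ` Lcone v I" and "s \<longlonglongrightarrow> y"
    using assms(1) unfolding Xset_def closure_sequential by blast
  have "\<forall>j. \<exists>z. z \<in> Lcone v I \<and> s j = Amap v I (lat z)"
    using s by blast
  then obtain z where z: "\<And>j. z j \<in> Lcone v I" and "s = (\<lambda>j. Amap v I (lat (z j)))"
    by metis
  with \<open>s \<longlonglongrightarrow> y\<close> have lim: "(\<lambda>j. Amap v I (lat (z j))) \<longlonglongrightarrow> y"
    by simp
  have "\<forall>\<^sub>F j in sequentially. \<forall>k\<in>I. dist (Amap v I (lat (z j)) k) (y k) < \<epsilon>"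
    using lim assms(2,3) by (intro eventually_ball_finite) (auto simp: tendsto_fun_iff tendstoD)
  then obtain j where "\<forall>k\<in>I. dist (Amap v I (lat (z j)) k) (y k) < \<epsilon>"
    using eventually_happens'[OF sequentially_bot] by blast
  then show thesis using z by (intro that[of "z j"]) (auto simp: Amap_def dist_real_def)
qed

lemma Xset_restrict:
  assumes "I \<subseteq> I0" "y \<in> Xset v I0"
  shows "(\<lambda>k. if k \<in> I then y k else 0) \<in> Xset v I"
proof -
  let ?R = "\<lambda>(y :: nat \<Rightarrow> real) k. if k \<in> I then y k else 0"
  have cont: "continuous_on UNIV ?R"
  proof (intro continuous_on_coordinatewise_then_product)
    show "continuous_on UNIV (\<lambda>y. ?R y k)" for k by (cases "k \<in> I") auto
  qed
  have "?R ` Xset v I0 \<subseteq> closure (?R ` (\<lambda>z. Amap v I0 (lat z)) ` Lcone v I0)"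
    unfolding Xset_def
    by (rule image_closure_subset[OF continuous_on_subset[OF cont] closed_closure closure_subset])
       simp
  also have "\<dots> \<subseteq> Xset v I"
    unfolding Xset_def using assms(1)
    by (intro closure_mono) (force simp: Amap_def Lcone_def)
  finally show ?thesis using assms(2) by blast
qed

lemma completely_irrational_subset:
  assumes "completely_irrational v I0" "I \<subseteq> I0"
  shows "completely_irrational v I"
  unfolding completely_irrational_iff
proof (intro equalityI subsetI)
  fix y assume y: "y \<in> nonneg_orthant I"
  then have "y \<in> Xset v I0"
    using assms by (auto simp: completely_irrational_iff nonneg_orthant_def)
  then have "(\<lambda>k. if k \<in> I then y k else 0) \<in> Xset v I"
    using assms(2) by (rule Xset_restrict[rotated])
  moreover have "(\<lambda>k. if k \<in> I then y k else 0) = y"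
    using y by (auto simp: nonneg_orthant_def)
  ultimately show "y \<in> Xset v I" by simp
qed (use Xset_subset_nonneg_orthant in blast)

lemma openin_fell_topology_cylinder:
  assumes "finite F"
  shows "openin fell_topology {g. \<forall>m\<in>F. g m = h m}"
proof -
  define U where "U m = (if m \<in> F then {h m} else UNIV)" for m
  have "{g. \<forall>m\<in>F. g m = h m} = Pi\<^sub>E UNIV U"
  proof (intro set_eqI iffI)
    fix g assume "g \<in> {g. \<forall>m\<in>F. g m = h m}"
    then show "g \<in> Pi\<^sub>E UNIV U" by (simp add: PiE_iff U_def)
  next
    fix g assume "g \<in> Pi\<^sub>E UNIV U"
    then have gU: "g m \<in> U m" for m by (rule PiE_mem) simp
    have "g m = h m" if "m \<in> F" for m
      using gU[of m] that by (simp add: U_def)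
    then show "g \<in> {g. \<forall>m\<in>F. g m = h m}" by simp
  qed
  moreover have "finite {m \<in> UNIV. U m \<noteq> UNIV}"
    using assms by (rule finite_subset[rotated]) (auto simp: U_def)
  ultimately show ?thesis
    unfolding fell_topology_def by (simp add: openin_PiE_gen)
qed

lemma openin_fell_topologyD:
  assumes T: "openin fell_topology T" and "f \<in> T"
  obtains F where "finite F" "{g. \<forall>m\<in>F. g m = f m} \<subseteq> T"
proof -
  obtain U where fin: "finite {m \<in> UNIV. U m \<noteq> UNIV}"
      and U: "f \<in> Pi\<^sub>E UNIV U" "Pi\<^sub>E UNIV U \<subseteq> T"
    using T \<open>f \<in> T\<close>
    unfolding fell_topology_def openin_product_topology_alt topspace_discrete_topology by blast
  have "{g. \<forall>m\<in>{m \<in> UNIV. U m \<noteq> UNIV}. g m = f m} \<subseteq> Pi\<^sub>E UNIV U"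
  proof
    fix g assume g: "g \<in> {g. \<forall>m\<in>{m \<in> UNIV. U m \<noteq> UNIV}. g m = f m}"
    have "g m \<in> U m" for m
    proof (cases "U m = UNIV")
      case False
      then show ?thesis using g PiE_mem[OF U(1)] by auto
    qed simp
    then show "g \<in> Pi\<^sub>E UNIV U" by (simp add: PiE_iff)
  qed
  then show thesis
    using fin U(2) that by (meson subset_trans)
qed

lemma mem_fell_closure_iff:
  "A \<in> fell_closure S \<longleftrightarrow> (\<forall>F. finite F \<longrightarrow> (\<exists>B\<in>S. \<forall>m\<in>F. m \<in> B \<longleftrightarrow> m \<in> A))"
proof -
  have "A \<in> fell_closure S \<longleftrightarrow>
      (\<forall>T. (\<lambda>z. z \<in> A) \<in> T \<and> openin fell_topology T \<longrightarrow> (\<exists>B\<in>S. (\<lambda>z. z \<in> B) \<in> T))"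
    by (auto simp: fell_closure_def in_closure_of fell_topology_def)
  also have "\<dots> \<longleftrightarrow> (\<forall>F. finite F \<longrightarrow> (\<exists>B\<in>S. \<forall>m\<in>F. m \<in> B \<longleftrightarrow> m \<in> A))"
  proof (intro iffI allI impI)
    fix F :: "(int^'a) set"
    assume closure: "\<forall>T. (\<lambda>z. z \<in> A) \<in> T \<and> openin fell_topology T \<longrightarrow> (\<exists>B\<in>S. (\<lambda>z. z \<in> B) \<in> T)"
      and "finite F"
    have "(\<lambda>z. z \<in> A) \<in> {g. \<forall>m\<in>F. g m = (m \<in> A)}" by simp
    with openin_fell_topology_cylinder[OF \<open>finite F\<close>]
    have "\<exists>B\<in>S. (\<lambda>z. z \<in> B) \<in> {g. \<forall>m\<in>F. g m = (m \<in> A)}"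
      by (intro closure[rule_format] conjI)
    then obtain B where "B \<in> S" "(\<lambda>z. z \<in> B) \<in> {g. \<forall>m\<in>F. g m = (m \<in> A)}" ..
    then show "\<exists>B\<in>S. \<forall>m\<in>F. m \<in> B \<longleftrightarrow> m \<in> A"
      by (intro bexI[of _ B]) simp_all
  next
    fix T
    assume finite_match: "\<forall>F. finite F \<longrightarrow> (\<exists>B\<in>S. \<forall>m\<in>F. m \<in> B \<longleftrightarrow> m \<in> A)"
      and T: "(\<lambda>z. z \<in> A) \<in> T \<and> openin fell_topology T"
    then obtain F where "finite F" and sub: "{g. \<forall>m\<in>F. g m = (m \<in> A)} \<subseteq> T"
      using openin_fell_topologyD[of T "\<lambda>z. z \<in> A"] by blast
    obtain B where "B \<in> S" "\<forall>m\<in>F. m \<in> B \<longleftrightarrow> m \<in> A"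
      using finite_match \<open>finite F\<close> by blast
    then show "\<exists>B\<in>S. (\<lambda>z. z \<in> B) \<in> T"
      using sub by (intro bexI[of _ B]) auto
  qed
  finally show ?thesis .
qed

lemma mem_Xi_iff:
  "A \<in> Xi v I \<longleftrightarrow>
     (\<forall>F. finite F \<longrightarrow> (\<exists>z\<in>Lcone v I. \<forall>m\<in>F. m + z \<in> Lcone v I \<longleftrightarrow> m \<in> A))"
proof -
  have shift: "m \<in> (\<lambda>m. m - z) ` Lcone v I \<longleftrightarrow> m + z \<in> Lcone v I" for m z
    by (auto simp: image_iff intro!: bexI[of _ "m + z"])
  have "(\<exists>B\<in>{(\<lambda>m. m - z) ` Lcone v I | z. z \<in> Lcone v I}. Q B) \<longleftrightarrow>
      (\<exists>z\<in>Lcone v I. Q ((\<lambda>m. m - z) ` Lcone v I))" for Q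
    by blast
  then show ?thesis
    unfolding Xi_def mem_fell_closure_iff by (simp add: shift)
qed

lemma Xi_empty: "Xi v {} = {UNIV}"
proof -
  have "A \<in> Xi v {} \<longleftrightarrow> (\<forall>F. finite F \<longrightarrow> F \<subseteq> A)" for A
    unfolding mem_Xi_iff by (simp add: Lcone_def subset_eq)
  also have "(\<forall>F. finite F \<longrightarrow> F \<subseteq> A) \<longleftrightarrow> A = UNIV" for A :: "(int^'a) set"
    by (metis finite.emptyI finite_insert insert_subset subset_UNIV subset_antisym subsetI)
  finally show ?thesis by blast
qed

definition LJ_family :: "(nat \<Rightarrow> real^'n) \<Rightarrow> nat set \<Rightarrow> (int^'n) set set" where
  "LJ_family v I = (\<Union>J\<in>Pow I. {LJ v I J x | x. x \<in> XJ v I J})"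

lemma LJ_mem_Xi:
  assumes ci: "completely_irrational v I" and "finite I" "J \<subseteq> I" and x: "x \<in> XJ v I J"
  shows "LJ v I J x \<in> Xi v I"
  unfolding mem_Xi_iff
proof (intro allI impI)
  fix F :: "(int^'a) set" assume "finite F"
  have x_orthant: "x \<in> nonneg_orthant I"
    using x Xset_subset_nonneg_orthant by (auto simp: XJ_def)
  have x_pos: "0 < x k" if "k \<in> J" for k
  proof -
    have "x k \<noteq> 0" using x that by (auto simp: XJ_def)
    moreover have "0 \<le> x k" using x_orthant that \<open>J \<subseteq> I\<close> by (auto simp: nonneg_orthant_def)
    ultimately show ?thesis by simp
  qed
  define T where "T = {v k \<bullet> lat m + x k | k m. k \<in> I \<and> m \<in> F} \<union> x ` J"
  have "finite T"
    unfolding T_def using \<open>finite I\<close> \<open>finite F\<close> finite_subset[OF \<open>J \<subseteq> I\<close>]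
    by (simp add: finite_image_set2)
  then obtain \<delta> where "\<delta> > 0" and margin: "\<And>t. t \<in> T \<Longrightarrow> t \<noteq> 0 \<Longrightarrow> \<delta> \<le> \<bar>t\<bar>"
    using finite_nonzero_abs_lower_bound by blast
  have x_ge: "\<delta> \<le> x k" if "k \<in> J" for k
    using margin[of "x k"] x_pos[OF that] that by (auto simp: T_def)
  define y where "y k = (if k \<in> J then x k - \<delta>/2 else if k \<in> I then x k + \<delta>/2 else 0)" for k
  have "y \<in> nonneg_orthant I"
    using x_orthant x_ge \<open>\<delta> > 0\<close> \<open>J \<subseteq> I\<close> by (force simp: y_def nonneg_orthant_def)
  then obtain z where "z \<in> Lcone v I" and z: "\<And>k. k \<in> I \<Longrightarrow> \<bar>v k \<bullet> lat z - y k\<bar> < \<delta>/2"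
    using ci \<open>finite I\<close> \<open>\<delta> > 0\<close> Xset_approx[of y v I "\<delta>/2"]
    by (auto simp: completely_irrational_iff)
  have "m + z \<in> Lcone v I \<longleftrightarrow> m \<in> LJ v I J x" if "m \<in> F" for m
  proof (rule add_mem_Lcone_iff_mem_LJ[OF \<open>J \<subseteq> I\<close>])
    fix k assume "k \<in> I"
    then have "\<bar>v k \<bullet> lat z - x k\<bar> < \<delta> \<and> (v k \<bullet> lat z < x k \<longleftrightarrow> k \<in> J)"
      using z[of k] \<open>\<delta> > 0\<close> by (cases "k \<in> J") (auto simp: y_def abs_if split: if_splits)
    moreover have "v k \<bullet> lat m + x k \<noteq> 0 \<Longrightarrow> \<delta> \<le> \<bar>v k \<bullet> lat m + x k\<bar>"
      using margin[of "v k \<bullet> lat m + x k"] \<open>k \<in> I\<close> \<open>m \<in> F\<close> by (auto simp: T_def)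
    ultimately show "v k \<bullet> lat m + x k \<noteq> 0 \<Longrightarrow> \<bar>v k \<bullet> lat z - x k\<bar> < \<bar>v k \<bullet> lat m + x k\<bar>"
      and "k \<in> J \<longleftrightarrow> v k \<bullet> lat z < x k" by auto
  qed
  then show "\<exists>z\<in>Lcone v I. \<forall>m\<in>F. m + z \<in> Lcone v I \<longleftrightarrow> m \<in> LJ v I J x"
    using \<open>z \<in> Lcone v I\<close> by blast
qed

lemma Lcone_far_along_coordinate:
  assumes "completely_irrational v I" "finite I" "i \<in> I" "\<delta> > 0"
  obtains w where "w \<in> Lcone v I" "M < v i \<bullet> lat w"
    "\<And>k. k \<in> I - {i} \<Longrightarrow> \<bar>v k \<bullet> lat w\<bar> < \<delta>"
proof -
  define y where "y k = (if k = i then max M 0 + 1 else 0)" for k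
  have "y \<in> Xset v I"
    using assms(1,3) by (auto simp: completely_irrational_iff nonneg_orthant_def y_def)
  define \<epsilon> where "\<epsilon> = min \<delta> 1"
  have "\<epsilon> > 0" using \<open>\<delta> > 0\<close> by (simp add: \<epsilon>_def)
  obtain w where "w \<in> Lcone v I" and w: "\<And>k. k \<in> I \<Longrightarrow> \<bar>v k \<bullet> lat w - y k\<bar> < \<epsilon>"
    using Xset_approx[OF \<open>y \<in> Xset v I\<close> \<open>finite I\<close> \<open>\<epsilon> > 0\<close>] by blast
  moreover have "M < v i \<bullet> lat w"
    using w[OF \<open>i \<in> I\<close>] by (simp add: y_def \<epsilon>_def abs_less_iff)
  moreover have "\<bar>v k \<bullet> lat w\<bar> < \<delta>" if "k \<in> I - {i}" for k
    using w[of k] that by (simp add: y_def \<epsilon>_def)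
  ultimately show thesis using that by blast
qed

lemma add_mem_Lcone_iff_mem_Lcone_remove:
  assumes "i \<in> I" "w \<in> Lcone v I" "\<bar>v i \<bullet> lat m\<bar> \<le> v i \<bullet> lat w"
    and small: "\<And>k. k \<in> I - {i} \<Longrightarrow> v k \<bullet> lat m \<noteq> 0 \<Longrightarrow> \<bar>v k \<bullet> lat w\<bar> < \<bar>v k \<bullet> lat m\<bar>"
  shows "m + w \<in> Lcone v I \<longleftrightarrow> m \<in> Lcone v (I - {i})"
proof -
  have "0 \<le> v i \<bullet> lat (m + w)"
    using assms(3) by (simp add: lat_add inner_add_right abs_le_iff)
  moreover have "m + w \<in> Lcone v (I - {i}) \<longleftrightarrow> m \<in> LJ v (I - {i}) {} (\<lambda>_. 0)"
  proof (rule add_mem_Lcone_iff_mem_LJ)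
    fix k assume "k \<in> I - {i}"
    then show "v k \<bullet> lat m + 0 \<noteq> 0 \<Longrightarrow> \<bar>v k \<bullet> lat w - 0\<bar> < \<bar>v k \<bullet> lat m + 0\<bar>"
      using small by simp
    show "k \<in> {} \<longleftrightarrow> v k \<bullet> lat w < 0"
      using \<open>w \<in> Lcone v I\<close> \<open>k \<in> I - {i}\<close> by (auto simp: Lcone_def)
  qed simp
  ultimately show ?thesis
    using \<open>i \<in> I\<close> by (simp add: mem_Lcone_remove_iff[of i I] LJ_empty_zero)
qed

lemma Xi_remove_subset:
  assumes ci: "completely_irrational v I" and "finite I" "i \<in> I"
  shows "Xi v (I - {i}) \<subseteq> Xi v I"
proof
  fix A assume "A \<in> Xi v (I - {i})"
  show "A \<in> Xi v I"
    unfolding mem_Xi_iff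
  proof (intro allI impI)
    fix F :: "(int^'a) set" assume "finite F"
    then obtain z0 where "z0 \<in> Lcone v (I - {i})"
      and z0: "\<And>m. m \<in> F \<Longrightarrow> m + z0 \<in> Lcone v (I - {i}) \<longleftrightarrow> m \<in> A"
      using \<open>A \<in> Xi v (I - {i})\<close> unfolding mem_Xi_iff by blast
    let ?F0 = "insert 0 F"
    define T where "T = {v k \<bullet> lat (m + z0) | k m. k \<in> I \<and> m \<in> ?F0}"
    have "finite T"
      unfolding T_def using \<open>finite I\<close> \<open>finite F\<close> by (simp add: finite_image_set2)
    then obtain \<delta> where "\<delta> > 0" and margin: "\<And>t. t \<in> T \<Longrightarrow> t \<noteq> 0 \<Longrightarrow> \<delta> \<le> \<bar>t\<bar>"
      using finite_nonzero_abs_lower_bound by blast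
    define M where "M = Max ((\<lambda>m. \<bar>v i \<bullet> lat (m + z0)\<bar>) ` ?F0)"
    have M: "\<bar>v i \<bullet> lat (m + z0)\<bar> \<le> M" if "m \<in> ?F0" for m
      unfolding M_def using \<open>finite F\<close> that by (intro Max_ge) auto
    obtain w where "w \<in> Lcone v I" and w_i: "M < v i \<bullet> lat w"
      and w_small: "\<And>k. k \<in> I - {i} \<Longrightarrow> \<bar>v k \<bullet> lat w\<bar> < \<delta>"
      using Lcone_far_along_coordinate[OF ci \<open>finite I\<close> \<open>i \<in> I\<close> \<open>\<delta> > 0\<close>] by blast
    have shift: "m + z0 + w \<in> Lcone v I \<longleftrightarrow> m + z0 \<in> Lcone v (I - {i})" if "m \<in> ?F0" for m
    proof (rule add_mem_Lcone_iff_mem_Lcone_remove[OF \<open>i \<in> I\<close> \<open>w \<in> Lcone v I\<close>])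
      show "\<bar>v i \<bullet> lat (m + z0)\<bar> \<le> v i \<bullet> lat w"
        using M[OF that] w_i by simp
      fix k assume "k \<in> I - {i}" "v k \<bullet> lat (m + z0) \<noteq> 0"
      moreover have "v k \<bullet> lat (m + z0) \<in> T"
        using \<open>k \<in> I - {i}\<close> that unfolding T_def by blast
      ultimately have "\<delta> \<le> \<bar>v k \<bullet> lat (m + z0)\<bar>"
        using margin by blast
      moreover have "\<bar>v k \<bullet> lat w\<bar> < \<delta>"
        using w_small \<open>k \<in> I - {i}\<close> by blast
      ultimately show "\<bar>v k \<bullet> lat w\<bar> < \<bar>v k \<bullet> lat (m + z0)\<bar>"
        by linarith
    qed
    have "z0 + w \<in> Lcone v I"
      using shift[of 0] \<open>z0 \<in> Lcone v (I - {i})\<close> by simp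
    moreover have "m + (z0 + w) \<in> Lcone v I \<longleftrightarrow> m \<in> A" if "m \<in> F" for m
      using shift[of m] z0[OF that] that by (simp add: add.assoc)
    ultimately show "\<exists>z\<in>Lcone v I. \<forall>m\<in>F. m + z \<in> Lcone v I \<longleftrightarrow> m \<in> A" by blast
  qed
qed

lemma Xi_approximating_seq:
  assumes "A \<in> Xi v I"
  obtains z where "\<And>j. z j \<in> Lcone v I"
    and "\<And>m. \<forall>\<^sub>F j in sequentially. m + z j \<in> Lcone v I \<longleftrightarrow> m \<in> A"
proof -
  have "\<exists>z\<in>Lcone v I. \<forall>m\<in>to_nat -` {..j}. m + z \<in> Lcone v I \<longleftrightarrow> m \<in> A" for j
    using assms finite_vimageI[OF finite_atMost inj_to_nat] unfolding mem_Xi_iff by blast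
  then obtain z where z: "\<And>j. z j \<in> Lcone v I"
    and match: "\<And>j m. to_nat m \<le> j \<Longrightarrow> m + z j \<in> Lcone v I \<longleftrightarrow> m \<in> A"
    by (metis atMost_iff vimageI)
  have "\<forall>\<^sub>F j in sequentially. m + z j \<in> Lcone v I \<longleftrightarrow> m \<in> A" for m
    unfolding eventually_sequentially by (intro exI[of _ "to_nat m"] allI impI match)
  then show thesis
    using z that by blast
qed

lemma mem_Xi_remove_of_unbounded:
  assumes z: "\<And>j. z j \<in> Lcone v I"
    and match: "\<And>m. \<forall>\<^sub>F j in sequentially. m + z j \<in> Lcone v I \<longleftrightarrow> m \<in> A"
    and "i \<in> I" and unbounded: "\<not> bdd_above (range (\<lambda>j. v i \<bullet> lat (z j)))"
  shows "A \<in> Xi v (I - {i})"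
  unfolding mem_Xi_iff
proof (intro allI impI)
  fix F :: "(int^'a) set" assume "finite F"
  have "\<forall>\<^sub>F j in sequentially. \<forall>m\<in>F. m + z j \<in> Lcone v I \<longleftrightarrow> m \<in> A"
    by (intro eventually_ball_finite \<open>finite F\<close> ballI match)
  then obtain N where N: "\<forall>j\<ge>N. \<forall>m\<in>F. m + z j \<in> Lcone v I \<longleftrightarrow> m \<in> A"
    unfolding eventually_sequentially ..
  define M where "M = Max ((\<lambda>m. \<bar>v i \<bullet> lat m\<bar>) ` F)"
  have M: "\<bar>v i \<bullet> lat m\<bar> \<le> M" if "m \<in> F" for m
    unfolding M_def using \<open>finite F\<close> that by (intro Max_ge) auto
  obtain j where "j \<ge> N" "v i \<bullet> lat (z j) > M"
    using not_bdd_above_exceeds[OF unbounded] by blast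
  have "m + z j \<in> Lcone v (I - {i}) \<longleftrightarrow> m \<in> A" if "m \<in> F" for m
  proof -
    have "0 \<le> v i \<bullet> lat (m + z j)"
      using M[OF that] \<open>v i \<bullet> lat (z j) > M\<close> by (simp add: lat_add inner_add_right abs_le_iff)
    moreover have "m + z j \<in> Lcone v I \<longleftrightarrow> m \<in> A"
      using N \<open>j \<ge> N\<close> that by simp
    ultimately show ?thesis
      using mem_Lcone_remove_iff[OF \<open>i \<in> I\<close>, of "m + z j" v] by simp
  qed
  moreover have "z j \<in> Lcone v (I - {i})"
    using z by (auto simp: Lcone_def)
  ultimately show "\<exists>z\<in>Lcone v (I - {i}). \<forall>m\<in>F. m + z \<in> Lcone v (I - {i}) \<longleftrightarrow> m \<in> A" by blast
qed

lemma eq_LJ_of_converging_translates: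
  assumes "finite I" "J \<subseteq> I"
    and match: "\<And>m. \<forall>\<^sub>F j in sequentially. m + z j \<in> Lcone v I \<longleftrightarrow> m \<in> A"
    and lim: "\<And>k. k \<in> I \<Longrightarrow> (\<lambda>j. v k \<bullet> lat (z j)) \<longlonglongrightarrow> x k"
    and side: "\<And>j k w. k \<in> I \<Longrightarrow> x k = v k \<bullet> lat w \<Longrightarrow> v k \<bullet> lat (z j) < x k \<longleftrightarrow> k \<in> J"
  shows "A = LJ v I J x"
proof (rule set_eqI)
  fix m
  have "\<forall>\<^sub>F j in sequentially. \<forall>k\<in>I. v k \<bullet> lat m + x k \<noteq> 0 \<longrightarrow>
      \<bar>v k \<bullet> lat (z j) - x k\<bar> < \<bar>v k \<bullet> lat m + x k\<bar>"
    using lim \<open>finite I\<close> by (intro eventually_ball_finite) (auto simp: tendsto_iff dist_real_def)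
  then obtain j where close: "\<forall>k\<in>I. v k \<bullet> lat m + x k \<noteq> 0 \<longrightarrow>
      \<bar>v k \<bullet> lat (z j) - x k\<bar> < \<bar>v k \<bullet> lat m + x k\<bar>"
    and "m + z j \<in> Lcone v I \<longleftrightarrow> m \<in> A"
    using eventually_happens'[OF sequentially_bot eventually_conj[OF _ match]] by blast
  moreover have "m + z j \<in> Lcone v I \<longleftrightarrow> m \<in> LJ v I J x"
  proof (rule add_mem_Lcone_iff_mem_LJ[OF \<open>J \<subseteq> I\<close>])
    fix k assume "k \<in> I"
    then show "v k \<bullet> lat m + x k \<noteq> 0 \<Longrightarrow> \<bar>v k \<bullet> lat (z j) - x k\<bar> < \<bar>v k \<bullet> lat m + x k\<bar>"
      using close by simp
    assume "v k \<bullet> lat m + x k = 0"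
    then have "x k = v k \<bullet> lat (- m)"
      by (simp add: lat_uminus inner_minus_right)
    then show "k \<in> J \<longleftrightarrow> v k \<bullet> lat (z j) < x k"
      using side[OF \<open>k \<in> I\<close>, of "- m" j] by simp
  qed
  ultimately show "m \<in> A \<longleftrightarrow> m \<in> LJ v I J x" by simp
qed

lemma mem_LJ_family_of_bounded:
  assumes "finite I"
    and z: "\<And>j. z j \<in> Lcone v I"
    and match: "\<And>m. \<forall>\<^sub>F j in sequentially. m + z j \<in> Lcone v I \<longleftrightarrow> m \<in> A"
    and bdd: "\<And>k. k \<in> I \<Longrightarrow> bdd_above (range (\<lambda>j. v k \<bullet> lat (z j)))"
  shows "A \<in> LJ_family v I"
proof -
  define a where "a j k = v k \<bullet> lat (z j)" for j k
  have a_nonneg: "0 \<le> a j k" if "k \<in> I" for j k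
    using z that by (simp add: a_def Lcone_def)
  have "bounded (range (\<lambda>j. a j k))" if "k \<in> I" for k
    using a_nonneg[OF that] bdd[OF that] unfolding a_def by (rule bounded_range_nonneg_bdd_above)
  then obtain q x P where "strict_mono q" and lim: "\<forall>k\<in>I. (\<lambda>j. a (q j) k) \<longlonglongrightarrow> x k"
    and below_iff: "\<forall>j. \<forall>k\<in>I. a (q j) k < x k \<longleftrightarrow> k \<in> P"
    using finite_bounded_seqs_one_sided_subseq[OF \<open>finite I\<close>] by blast
  define x' where "x' k = (if k \<in> I then x k else 0)" for k
  define J where "J = {k \<in> I \<inter> P. \<exists>w. x k = v k \<bullet> lat w}"
  have "J \<subseteq> I" by (auto simp: J_def)
  have "(\<lambda>j. Amap v I (lat (z (q j)))) \<longlonglongrightarrow> x'"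
    unfolding tendsto_fun_iff using lim by (auto simp: Amap_def x'_def a_def)
  moreover have "Amap v I (lat (z (q j))) \<in> (\<lambda>z. Amap v I (lat z)) ` Lcone v I" for j
    using z by blast
  ultimately have "x' \<in> Xset v I"
    unfolding Xset_def closure_sequential
    by (intro exI[of _ "\<lambda>j. Amap v I (lat (z (q j)))"] conjI allI)
  moreover have "x k \<noteq> 0" if "k \<in> J" for k
    using a_nonneg[of k "q 0"] below_iff[rule_format, of k 0] that by (auto simp: J_def)
  ultimately have "x' \<in> XJ v I J"
    using \<open>J \<subseteq> I\<close> by (auto simp: XJ_def J_def x'_def)
  moreover have "A = LJ v I J x'"
  proof (rule eq_LJ_of_converging_translates[OF \<open>finite I\<close> \<open>J \<subseteq> I\<close>])
    show "\<forall>\<^sub>F j in sequentially. m + z (q j) \<in> Lcone v I \<longleftrightarrow> m \<in> A" for m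
      using eventually_subseq[OF \<open>strict_mono q\<close> match] .
    show "(\<lambda>j. v k \<bullet> lat (z (q j))) \<longlonglongrightarrow> x' k" if "k \<in> I" for k
      using lim that by (simp add: x'_def a_def)
    show "v k \<bullet> lat (z (q j)) < x' k \<longleftrightarrow> k \<in> J" if "k \<in> I" "x' k = v k \<bullet> lat w" for j k w
      using below_iff[rule_format, of k j] that by (auto simp: J_def x'_def a_def)
  qed
  ultimately show ?thesis
    unfolding LJ_family_def using \<open>J \<subseteq> I\<close> by auto
qed

lemma mem_Xi_cases:
  assumes "finite I" "A \<in> Xi v I"
  shows "A \<in> LJ_family v I \<or> (\<exists>i\<in>I. A \<in> Xi v (I - {i}))"
proof -
  obtain z where z: "\<And>j. z j \<in> Lcone v I"
    and match: "\<And>m. \<forall>\<^sub>F j in sequentially. m + z j \<in> Lcone v I \<longleftrightarrow> m \<in> A"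
    using Xi_approximating_seq[OF assms(2)] by blast
  show ?thesis
  proof (cases "\<exists>i\<in>I. \<not> bdd_above (range (\<lambda>j. v i \<bullet> lat (z j)))")
    case True
    then obtain i where "i \<in> I" and "\<not> bdd_above (range (\<lambda>j. v i \<bullet> lat (z j)))" ..
    then have "A \<in> Xi v (I - {i})"
      by (rule mem_Xi_remove_of_unbounded[OF z match])
    with \<open>i \<in> I\<close> show ?thesis by blast
  next
    case False
    then have "A \<in> LJ_family v I"
      by (intro mem_LJ_family_of_bounded[OF assms(1) z match]) simp
    then show ?thesis ..
  qed
qed

lemma Xi_decomposition:
  assumes "completely_irrational v I" "finite I"
  shows "Xi v I = LJ_family v I \<union> (\<Union>i\<in>I. Xi v (I - {i}))"
proof (intro equalityI subsetI)
  fix A assume "A \<in> Xi v I"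
  then show "A \<in> LJ_family v I \<union> (\<Union>i\<in>I. Xi v (I - {i}))"
    using mem_Xi_cases[OF assms(2)] by blast
next
  fix A assume "A \<in> LJ_family v I \<union> (\<Union>i\<in>I. Xi v (I - {i}))"
  then show "A \<in> Xi v I"
  proof
    assume "A \<in> LJ_family v I"
    then obtain J x where "J \<subseteq> I" "x \<in> XJ v I J" "A = LJ v I J x"
      by (auto simp: LJ_family_def)
    then show ?thesis using LJ_mem_Xi[OF assms] by simp
  next
    assume "A \<in> (\<Union>i\<in>I. Xi v (I - {i}))"
    then show ?thesis using Xi_remove_subset[OF assms] by blast
  qed
qed

lemma Xi_eq_UN_LJ_family:
  assumes "finite I" "completely_irrational v I"
  shows "Xi v I = (\<Union>I'\<in>Pow I - {{}}. LJ_family v I') \<union> {UNIV}"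
  using assms
proof (induction I rule: finite_psubset_induct)
  case (psubset I)
  show ?case
  proof (cases "I = {}")
    case True
    then show ?thesis by (simp add: Xi_empty)
  next
    case False
    have IH: "Xi v (I - {i}) = (\<Union>I'\<in>Pow (I - {i}) - {{}}. LJ_family v I') \<union> {UNIV}" if "i \<in> I" for i
    proof (rule psubset.IH)
      show "I - {i} \<subset> I" using that by blast
      show "completely_irrational v (I - {i})"
        by (rule completely_irrational_subset[OF psubset.prems]) blast
    qed
    have "Xi v I = LJ_family v I \<union> (\<Union>i\<in>I. Xi v (I - {i}))"
      using Xi_decomposition[OF psubset.prems psubset.hyps] .
    also have "\<dots> = (\<Union>I'\<in>Pow I - {{}}. LJ_family v I') \<union> {UNIV}"
      using False IH by (rule UN_nonempty_subsets_unfold)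
    finally show ?thesis .
  qed
qed

theorem mainTheorem4:
  fixes v :: "nat \<Rightarrow> real^'n" and d :: nat
  assumes d_pos: "d \<ge> 1"
    and indep: "independent (v ` {1..d})" and inj: "inj_on v {1..d}"
    and unit: "\<forall>i\<in>{1..d}. norm (v i) = 1"
    and rci: "RCI v d"
    and ci: "completely_irrational v {1..d}"
  shows "(Xi v {1..d} =
           (\<Union>J\<in>Pow {1..d}. {LJ v {1..d} J x | x. x \<in> XJ v {1..d} J})
           \<union> (\<Union>i\<in>{1..d}. Xi v ({1..d} - {i}))) \<and>
         (Xi v {1..d} =
           (\<Union>I\<in>Pow {1..d} - {{}}. \<Union>J\<in>Pow I. {LJ v I J x | x. x \<in> XJ v I J})
           \<union> {UNIV})"
  using Xi_decomposition[OF ci finite_atLeastAtMost] Xi_eq_UN_LJ_family[OF finite_atLeastAtMost ci]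
  by (simp add: LJ_family_def)

end
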